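(* Let $n\ge1$ and let $\phi,\theta\in S_n$ be $x$--$y$ equivalent. Then the cycle graphs $Gr(\phi)$ and $Gr(\theta)$ have the same number of alternating cycles.
   Context: Permutations are written in one-line notation $\phi=\langle\phi_1\dots\phi_n\rangle$; set $\phi_0=0$. The big black cycle $\phi^{\cdot}$ is the $(n+1)$-cycle on $\{0,\dots,n\}$ with $\phi^{\cdot}(\phi_i)=\phi_{i-1}$ for $1\le i\le n$ and $\phi^{\cdot}(0)=\phi_n$, i.e. $\phi^{\cdot}=(0,\phi_n,\dots,\phi_1)$. Write $a\to b$ when $\phi^{\cdot}(a)=b$. Each $(n+1)$-cycle $(0,c_n,\dots,c_1)$ is the big black cycle of the unique permutation $\langle c_1\dots c_n\rangle$. Cycle graph $Gr(\phi)$: vertices $0,\dots,n$; black edges $a\to\phi^{\cdot}(a)$; grey edges $v\dashrightarrow v+1\pmod{n+1}$. Its edges decompose uniquely into alternating cycles, obtained by following a black edge and then a grey edge. The number of alternating cycles equals the number of cycles, fixed points included, of the map $v\mapsto\phi^{\cdot}(v)+1\pmod{n+1}$. $x$--$y$ exchange operation, for $x,y\in\{0,\dots,n\}$, with $x+1$ read as $0$ when $x=n$: if $x+1\to y$ in $\phi^{\cdot}$, remove $y$ from its place immediately after $x+1$ and reinsert it immediately before $x$. The resulting cycle is $\theta^{\cdot}$. If $y=x$, or if $x+1\to y\to x$ already holds, nothing changes. $x$--$y$ cyclic operation: if $\phi^{\cdot}$ contains $x+1\to y\to x$ (for $x=n$: $0\to y\to n$), relabel the entries of $\phi^{\cdot}$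 to obtain $\theta^{\cdot}$ as follows. If $x<n$ and $y>x+1$, replace $x+1$ by $y-1$ and each $t$ with $x+2\le t\le y-1$ by $t-1$. If $y<x$, replace $x$ by $y+1$ and each $t$ with $y+1\le t\le x-1$ by $t+1$. Two permutations are $x$--$y$ equivalent if they are related by the equivalence relation on $S_n$ generated by all $x$--$y$ exchange operations and all $x$--$y$ cyclic operations, over all $x,y$. Concretely, this means there is a finite sequence of permutations joining them in which each consecutive pair is related, in one direction or the other, by a single such operation. *)

theory Defs
  imports Main
begin

text \<open>A permutation in S_n in one-line notation, as the list [phi_1, ..., phi_n].\<close>
definition is_perm :: "nat \<Rightarrow> nat list \<Rightarrow> bool" where
  "is_perm n xs \<longleftrightarrow> length xs = n \<and> distinct xs \<and> set xs = {1..n}"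

text \<open>The big black cycle: phi_i maps to phi_(i-1) (phi_0 = 0), 0 maps to phi_n;
  identity outside {0..n}.\<close>
definition bc :: "nat list \<Rightarrow> nat \<Rightarrow> nat" where
  "bc xs a = (if a = 0 then (if xs = [] then 0 else last xs)
              else if a \<in> set xs then (0 # xs) ! (THE i. i < length xs \<and> xs ! i = a)
              else a)"

definition sucm :: "nat \<Rightarrow> nat \<Rightarrow> nat" where
  "sucm n x = (if x = n then 0 else x + 1)"

text \<open>Result of the x--y exchange operation on a cycle c on {0..n} with c (x+1) = y:
  y is moved from right after x+1 to right before x.\<close>
definition exch :: "nat \<Rightarrow> (nat \<Rightarrow> nat) \<Rightarrow> nat \<Rightarrow> nat \<Rightarrow> nat \<Rightarrow> nat" where
  "exch n c x y a =
     (if n < a then a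
      else if y = x \<or> c y = x then c a
      else if a = sucm n x then c y
      else if c a = x then y
      else if a = y then x
      else c a)"

definition exch_step :: "nat \<Rightarrow> nat list \<Rightarrow> nat list \<Rightarrow> bool" where
  "exch_step n phi theta \<longleftrightarrow> is_perm n phi \<and> is_perm n theta \<and>
     (\<exists>x\<le>n. \<exists>y\<le>n. bc phi (sucm n x) = y \<and> bc theta = exch n (bc phi) x y)"

definition relabel :: "nat \<Rightarrow> nat \<Rightarrow> nat \<Rightarrow> nat \<Rightarrow> nat" where
  "relabel n x y t =
     (if x < n \<and> x + 1 < y then
        (if t = x + 1 then y - 1 else if x + 2 \<le> t \<and> t \<le> y - 1 then t - 1 else t)
      else if y < x then
        (if t = x then y + 1 else if y + 1 \<le> t \<and> t \<le> x - 1 then t + 1 else t)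
      else t)"

definition cyc_step :: "nat \<Rightarrow> nat list \<Rightarrow> nat list \<Rightarrow> bool" where
  "cyc_step n phi theta \<longleftrightarrow> is_perm n phi \<and> is_perm n theta \<and>
     (\<exists>x\<le>n. \<exists>y\<le>n. bc phi (sucm n x) = y \<and> bc phi y = x \<and>
        (\<forall>a\<le>n. bc theta (relabel n x y a) = relabel n x y (bc phi a)))"

definition xy_step :: "nat \<Rightarrow> nat list \<Rightarrow> nat list \<Rightarrow> bool" where
  "xy_step n phi theta \<longleftrightarrow> exch_step n phi theta \<or> cyc_step n phi theta"

definition xy_equiv :: "nat \<Rightarrow> nat list \<Rightarrow> nat list \<Rightarrow> bool" where
  "xy_equiv n = (\<lambda>p q. xy_step n p q \<or> xy_step n q p)\<^sup>*\<^sup>*"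

text \<open>Number of alternating cycles of Gr(phi): the number of cycles (orbits)
  of v \<mapsto> bc phi v + 1 (mod n+1) on {0..n}.\<close>
definition alt_map :: "nat \<Rightarrow> nat list \<Rightarrow> nat \<Rightarrow> nat" where
  "alt_map n phi v = (bc phi v + 1) mod (n + 1)"

definition alt_cycles :: "nat \<Rightarrow> nat list \<Rightarrow> nat" where
  "alt_cycles n phi =
     card ((\<lambda>v. {w. \<exists>k. (alt_map n phi ^^ k) v = w}) ` {0..n})"

end

theory Submission
  imports Defs
begin

text \<open>The alternating cycles of Gr(phi) are the cycles of the permutation s \<circ> bc phi of {0..n},
  where s v = (v + 1) mod (n + 1). Removing a point u that is not fixed from its cycle, i.e.\ sending
  its predecessor directly to its successor, does not change the number of cycles.
  An exchange operation changes s \<circ> bc phi only next to u = x + 1, and after removing u from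
  both permutations they coincide. A cyclic operation is a relabelling r, so s \<circ> bc theta is
  conjugate under r to h \<circ> bc phi with h = r\<inverse> \<circ> s \<circ> r; the map h differs from s in three
  points only, and after removing y (if y > x) or x + 1 (if y < x) the permutations
  h \<circ> bc phi and s \<circ> bc phi coincide.\<close>

section \<open>Counting the cycles of a map\<close>

definition reach :: "('a \<Rightarrow> 'a) \<Rightarrow> 'a \<Rightarrow> 'a set" where
  "reach f v = {w. \<exists>k. (f ^^ k) v = w}"

definition num_cycles :: "'a set \<Rightarrow> ('a \<Rightarrow> 'a) \<Rightarrow> nat" where
  "num_cycles S f = card (reach f ` S)"

lemma reach_self: "v \<in> reach f v"
  unfolding reach_def by (auto intro: exI[of _ 0])

lemma reach_step:
  assumes "w \<in> reach f v"
  shows "f w \<in> reach f v"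
proof -
  obtain k where "(f ^^ k) v = w" using assms by (auto simp: reach_def)
  then have "(f ^^ Suc k) v = f w" by simp
  then show ?thesis unfolding reach_def by blast
qed

lemma reach_trans: "w \<in> reach f v \<Longrightarrow> reach f w \<subseteq> reach f v"
proof
  fix u assume "w \<in> reach f v" "u \<in> reach f w"
  then obtain k m where "(f ^^ k) v = w" "(f ^^ m) w = u" by (auto simp: reach_def)
  then have "(f ^^ (m + k)) v = u" by (simp add: funpow_add)
  then show "u \<in> reach f v" by (auto simp: reach_def)
qed

lemma reach_minimal:
  assumes "v \<in> T" "\<And>a. a \<in> T \<Longrightarrow> f a \<in> T"
  shows "reach f v \<subseteq> T"
proof -
  have "(f ^^ k) v \<in> T" for k by (induct k) (use assms in auto)
  then show ?thesis by (auto simp: reach_def)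
qed

lemma reach_subset: "f ` S \<subseteq> S \<Longrightarrow> a \<in> S \<Longrightarrow> reach f a \<subseteq> S"
  by (rule reach_minimal) auto

lemma funpow_periodic:
  assumes "finite S" "bij_betw f S S" "a \<in> S"
  obtains m where "0 < m" "(f ^^ m) a = a"
proof -
  have in_S: "(f ^^ k) a \<in> S" for k
    using bij_betw_apply[OF bij_betw_funpow[OF assms(2)] assms(3)] .
  have "\<not> inj_on (\<lambda>k. (f ^^ k) a) {..card S}"
  proof
    assume "inj_on (\<lambda>k. (f ^^ k) a) {..card S}"
    then have "card {..card S} \<le> card S"
      by (rule card_inj_on_le) (use in_S assms(1) in auto)
    then show False by simp
  qed
  then obtain i j where "i \<noteq> j" "(f ^^ i) a = (f ^^ j) a"
    unfolding inj_on_def by blast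
  then obtain i j where ij: "i < j" "(f ^^ i) a = (f ^^ j) a"
    using nat_neq_iff by metis
  have "(f ^^ i) ((f ^^ (j - i)) a) = (f ^^ (i + (j - i))) a"
    by (simp add: funpow_add)
  also have "\<dots> = (f ^^ i) a" using ij by simp
  finally have "(f ^^ i) ((f ^^ (j - i)) a) = (f ^^ i) a" .
  then have "(f ^^ (j - i)) a = a"
    using bij_betw_imp_inj_on[OF bij_betw_funpow[OF assms(2)]] in_S assms(3)
    by (auto dest: inj_onD)
  then show thesis using that[of "j - i"] ij(1) by simp
qed

lemma reach_eq:
  assumes "finite S" "bij_betw f S S" "a \<in> S" "b \<in> reach f a"
  shows "reach f b = reach f a"
proof
  show "reach f b \<subseteq> reach f a" using reach_trans[OF assms(4)] .
  obtain m where m: "0 < m" "(f ^^ m) a = a" using funpow_periodic[OF assms(1-3)] .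
  obtain k where k: "(f ^^ k) a = b" using assms(4) by (auto simp: reach_def)
  have "(f ^^ (m * k - k)) b = (f ^^ (m * k - k + k)) a"
    using k by (simp only: funpow_add o_apply)
  also have "\<dots> = (f ^^ (m * k)) a"
    using m(1) by simp
  also have "\<dots> = a"
    using funpow_mod_eq[OF m(2), of "m * k"] by simp
  finally have "a \<in> reach f b" by (auto simp: reach_def)
  then show "reach f a \<subseteq> reach f b" by (rule reach_trans)
qed

lemma num_cycles_cong:
  assumes "\<And>a. a \<in> S \<Longrightarrow> f a = g a" "f ` S \<subseteq> S"
  shows "num_cycles S f = num_cycles S g"
proof -
  have "(f ^^ k) v = (g ^^ k) v \<and> (f ^^ k) v \<in> S" if "v \<in> S" for v k
    using that assms by (induct k) auto
  then have "reach f v = reach g v" if "v \<in> S" for v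
    using that by (auto simp: reach_def)
  then show ?thesis unfolding num_cycles_def by (simp cong: image_cong)
qed

lemma num_cycles_conj:
  assumes r: "bij_betw r S S" and g: "g ` S \<subseteq> S"
    and comm: "\<And>a. a \<in> S \<Longrightarrow> r (g a) = f (r a)"
  shows "num_cycles S f = num_cycles S g"
proof -
  have "(f ^^ k) (r a) = r ((g ^^ k) a) \<and> (g ^^ k) a \<in> S" if "a \<in> S" for a k
    using that by (induct k) (use comm g in auto)
  then have reach_r: "reach f (r a) = r ` reach g a" if "a \<in> S" for a
    using that by (auto simp: reach_def)
  have "reach f ` S = reach f ` r ` S"
    using bij_betw_imp_surj_on[OF r] by simp
  also have "\<dots> = image r ` reach g ` S"
    unfolding image_image using reach_r by (rule image_cong[OF refl])
  finally have "reach f ` S = image r ` reach g ` S" .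
  moreover have "inj_on (image r) (reach g ` S)"
  proof (rule inj_onI)
    fix A B assume "A \<in> reach g ` S" "B \<in> reach g ` S" "r ` A = r ` B"
    moreover have "A \<subseteq> S" "B \<subseteq> S" using calculation(1,2) reach_subset[OF g] by auto
    ultimately show "A = B"
      using inj_on_image_eq_iff[OF bij_betw_imp_inj_on[OF r]] by blast
  qed
  ultimately show ?thesis
    unfolding num_cycles_def by (simp add: card_image)
qed

lemma bij_betw_conj:
  assumes "finite S" and r: "bij_betw r S S" and f: "bij_betw f S S" and g: "g ` S \<subseteq> S"
    and comm: "\<And>a. a \<in> S \<Longrightarrow> r (g a) = f (r a)"
  shows "bij_betw g S S"
proof -
  have "inj_on g S"
  proof (rule inj_onI)
    fix a b assume ab: "a \<in> S" "b \<in> S" "g a = g b"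
    then have "f (r a) = f (r b)" using comm[OF ab(1)] comm[OF ab(2)] by simp
    then have "r a = r b"
      using ab bij_betw_apply[OF r] bij_betw_imp_inj_on[OF f] by (auto dest: inj_onD)
    then show "a = b" using ab bij_betw_imp_inj_on[OF r] by (auto dest: inj_onD)
  qed
  then show ?thesis using endo_inj_surj[OF assms(1) g] by (simp add: bij_betw_def)
qed

definition bypass :: "('a \<Rightarrow> 'a) \<Rightarrow> 'a \<Rightarrow> 'a \<Rightarrow> 'a" where
  "bypass f u a = (if f a = u then f u else f a)"

lemma bypass_image:
  assumes "bij_betw f S S" "u \<in> S" "f u \<noteq> u"
  shows "bypass f u ` (S - {u}) \<subseteq> S - {u}"
  using assms bij_betw_apply[OF assms(1)] by (auto simp: bypass_def)

lemma reach_bypass: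
  assumes bij: "bij_betw f S S" and u: "u \<in> S" "f u \<noteq> u" and v: "v \<in> S" "v \<noteq> u"
  shows "reach (bypass f u) v = reach f v - {u}"
proof (rule equalityI)
  let ?g = "bypass f u"
  show sub: "reach ?g v \<subseteq> reach f v - {u}"
  proof (rule reach_minimal)
    fix a assume a: "a \<in> reach f v - {u}"
    then have "f a \<in> reach f v" by (auto intro: reach_step)
    then show "?g a \<in> reach f v - {u}"
      using u(2) by (auto simp: bypass_def intro: reach_step)
  qed (use v reach_self in auto)
  have "u \<in> f ` S" using bij_betw_imp_surj_on[OF bij] u(1) by simp
  then obtain w where w: "w \<in> S" "f w = u" by blast
  have pred_u: "f a = u \<longleftrightarrow> a = w" if "a \<in> S" for a
    using w that bij_betw_imp_inj_on[OF bij] by (auto dest: inj_onD)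
  have R_sub: "reach ?g v \<subseteq> S"
    using reach_subset[OF bypass_image[OF bij u], of v] v by auto
  let ?T = "reach ?g v \<union> (if w \<in> reach ?g v then {u} else {})"
  have "reach f v \<subseteq> ?T"
  proof (rule reach_minimal)
    fix a assume a: "a \<in> ?T"
    show "f a \<in> ?T"
    proof (cases "a = u")
      case True
      then have "?g w \<in> reach ?g v" using a sub by (auto split: if_splits intro: reach_step)
      then show ?thesis using True w(2) by (simp add: bypass_def)
    next
      case False
      then have "a \<in> reach ?g v" "a \<in> S" using a R_sub by (auto split: if_splits)
      then show ?thesis using pred_u[of a] reach_step[of a ?g v] by (auto simp: bypass_def)
    qed
  qed (use reach_self in auto)
  then show "reach f v - {u} \<subseteq> reach ?g v" by (auto split: if_splits)
qed

lemma num_cycles_bypass: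
  assumes fin: "finite S" and bij: "bij_betw f S S" and u: "u \<in> S" "f u \<noteq> u"
  shows "num_cycles (S - {u}) (bypass f u) = num_cycles S f"
proof -
  have "reach (bypass f u) ` (S - {u}) = (\<lambda>A. A - {u}) ` reach f ` (S - {u})"
    unfolding image_image using reach_bypass[OF bij u] by (intro image_cong) auto
  moreover have "reach f ` (S - {u}) = reach f ` S"
  proof -
    have "u \<in> f ` S" using bij_betw_imp_surj_on[OF bij] u(1) by simp
    then obtain w where w: "w \<in> S" "f w = u" by blast
    have "reach f u = reach f w"
      using reach_eq[OF fin bij w(1) reach_step[OF reach_self]] w(2) by simp
    moreover have "w \<noteq> u" using w u(2) by auto
    ultimately have "reach f u \<in> reach f ` (S - {u})" using w(1) by auto
    then show ?thesis by blast
  qed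
  moreover have "inj_on (\<lambda>A. A - {u}) (reach f ` (S - {u}))"
  proof (rule inj_onI)
    fix A B assume "A \<in> reach f ` (S - {u})" "B \<in> reach f ` (S - {u})" "A - {u} = B - {u}"
    then obtain a b where ab: "a \<in> S" "a \<noteq> u" "b \<in> S" "A = reach f a" "B = reach f b"
      "reach f a - {u} = reach f b - {u}" by blast
    then have "a \<in> reach f b" using reach_self[of a f] by blast
    then show "A = B" using reach_eq[OF fin bij ab(3)] ab by simp
  qed
  ultimately show ?thesis unfolding num_cycles_def by (simp add: card_image)
qed

lemma num_cycles_eq_if_bypass_eq:
  assumes fin: "finite S" and f: "bij_betw f S S" and f': "bij_betw f' S S"
    and u: "u \<in> S" "f u \<noteq> u" "f' u \<noteq> u"
    and agree: "\<And>a. a \<in> S \<Longrightarrow> a \<noteq> u \<Longrightarrow> bypass f u a = bypass f' u a"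
  shows "num_cycles S f = num_cycles S f'"
proof -
  have "num_cycles (S - {u}) (bypass f u) = num_cycles (S - {u}) (bypass f' u)"
    using agree bypass_image[OF f u(1,2)] by (intro num_cycles_cong) auto
  then show ?thesis
    using num_cycles_bypass[OF fin f u(1,2)] num_cycles_bypass[OF fin f' u(1,3)] by simp
qed

section \<open>The big black cycle\<close>

lemma perm_cons_zero:
  assumes "is_perm n xs"
  shows "length (0 # xs) = n + 1" "distinct (0 # xs)" "set (0 # xs) = {0..n}"
  using assms by (auto simp: is_perm_def)

lemma bc_nth:
  assumes p: "is_perm n xs" and n: "1 \<le> n" and j: "j \<le> n"
  shows "bc xs ((0 # xs) ! j) = (0 # xs) ! (if j = 0 then n else j - 1)"
proof (cases j)
  case 0
  have len: "length xs = n" using p by (simp add: is_perm_def)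
  then have "xs \<noteq> []" using n by auto
  moreover have "last xs = (0 # xs) ! n"
    using last_conv_nth[OF \<open>xs \<noteq> []\<close>] len n by (cases n) auto
  ultimately show ?thesis using 0 by (simp add: bc_def)
next
  case (Suc i)
  have xs: "length xs = n" "distinct xs" "set xs = {1..n}" using p by (auto simp: is_perm_def)
  have i: "i < length xs" using Suc j xs(1) by simp
  have "(THE i'. i' < length xs \<and> xs ! i' = xs ! i) = i"
    using i xs(2) by (auto intro!: the_equality simp: nth_eq_iff_index_eq)
  moreover have "xs ! i \<noteq> 0" using nth_mem[OF i] xs(3) by auto
  ultimately show ?thesis using Suc nth_mem[OF i] by (simp add: bc_def)
qed

lemma perm_index:
  assumes "is_perm n xs" "a \<le> n"
  obtains j where "j \<le> n" "a = (0 # xs) ! j"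
proof -
  have "a \<in> set (0 # xs)" using perm_cons_zero(3)[OF assms(1)] assms(2) by simp
  then obtain j where "j < length (0 # xs)" "(0 # xs) ! j = a"
    unfolding in_set_conv_nth by blast
  then show thesis using that[of j] perm_cons_zero(1)[OF assms(1)] by simp
qed

lemma bc_bij:
  assumes p: "is_perm n xs" and n: "1 \<le> n"
  shows "bij_betw (bc xs) {0..n} {0..n}"
proof -
  let ?L = "0 # xs"
  define pred where "pred j = (if j = 0 then n else j - 1)" for j
  have bc_L: "bc xs (?L ! j) = ?L ! pred j" if "j \<le> n" for j
    using bc_nth[OF p n that] by (simp add: pred_def)
  have L: "length ?L = n + 1" "distinct ?L" "set ?L = {0..n}" using perm_cons_zero[OF p] by auto
  have L_eq: "?L ! i = ?L ! k \<longleftrightarrow> i = k" if "i \<le> n" "k \<le> n" for i k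
    using nth_eq_iff_index_eq[OF L(2)] that L(1) by simp
  have L_in: "?L ! i \<in> {0..n}" if "i \<le> n" for i
  proof -
    have "?L ! i \<in> set ?L" by (rule nth_mem) (use that L(1) in simp)
    then show ?thesis unfolding L(3) .
  qed
  have pred: "pred j \<le> n" "pred i = pred j \<longleftrightarrow> i = j" if "i \<le> n" "j \<le> n" for i j
    using that n unfolding pred_def by auto
  have "inj_on (bc xs) {0..n}"
  proof (rule inj_onI)
    fix a b assume ab: "a \<in> {0..n}" "b \<in> {0..n}" "bc xs a = bc xs b"
    have "a \<le> n" "b \<le> n" using ab(1,2) by auto
    obtain i where i: "i \<le> n" "a = ?L ! i" using perm_index[OF p \<open>a \<le> n\<close>] .
    obtain j where j: "j \<le> n" "b = ?L ! j" using perm_index[OF p \<open>b \<le> n\<close>] .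
    show "a = b" using i j ab(3) bc_L L_eq pred by simp
  qed
  moreover have "bc xs ` {0..n} \<subseteq> {0..n}"
  proof
    fix b assume "b \<in> bc xs ` {0..n}"
    then obtain a where "a \<le> n" "b = bc xs a" by auto
    moreover obtain j where "j \<le> n" "a = ?L ! j" using perm_index[OF p \<open>a \<le> n\<close>] .
    ultimately show "b \<in> {0..n}" using bc_L L_in pred(1) by simp
  qed
  ultimately show ?thesis using endo_inj_surj[of "{0..n}"] by (simp add: bij_betw_def)
qed

lemma bc_le:
  assumes "is_perm n xs" "1 \<le> n" "a \<le> n"
  shows "bc xs a \<le> n"
  using bij_betw_apply[OF bc_bij[OF assms(1,2)], of a] assms(3) by simp

lemma bc_eq_iff:
  assumes "is_perm n xs" "1 \<le> n" "a \<le> n" "b \<le> n"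
  shows "bc xs a = bc xs b \<longleftrightarrow> a = b"
  using inj_onD[OF bij_betw_imp_inj_on[OF bc_bij[OF assms(1,2)]], of a b] assms(3,4) by auto

lemma bc_surj:
  assumes "is_perm n xs" "1 \<le> n" "x \<le> n"
  obtains w where "w \<le> n" "bc xs w = x"
proof -
  have "x \<in> bc xs ` {0..n}" using bij_betw_imp_surj_on[OF bc_bij[OF assms(1,2)]] assms(3) by simp
  then show thesis using that by auto
qed

lemma bc_no_fixpoint:
  assumes p: "is_perm n xs" and n: "1 \<le> n" and a: "a \<le> n"
  shows "bc xs a \<noteq> a"
proof -
  obtain j where j: "j \<le> n" "a = (0 # xs) ! j" using perm_index[OF p a] .
  define i where "i = (if j = 0 then n else j - 1)"
  have "i \<le> n" "i \<noteq> j" using j(1) n by (auto simp: i_def)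
  then have "(0 # xs) ! i \<noteq> (0 # xs) ! j"
    using nth_eq_iff_index_eq[OF perm_cons_zero(2)[OF p]] perm_cons_zero(1)[OF p] j(1) by simp
  moreover have "bc xs ((0 # xs) ! j) = (0 # xs) ! i" using bc_nth[OF p n j(1)] by (simp add: i_def)
  ultimately show ?thesis using j(2) by simp
qed

lemma sucm_le: "x \<le> n \<Longrightarrow> sucm n x \<le> n"
  by (simp add: sucm_def)

lemma sucm_eq_iff: "a \<le> n \<Longrightarrow> b \<le> n \<Longrightarrow> sucm n a = sucm n b \<longleftrightarrow> a = b"
  by (auto simp: sucm_def)

lemma sucm_bij: "bij_betw (sucm n) {0..n} {0..n}"
proof -
  have "inj_on (sucm n) {0..n}" "sucm n ` {0..n} \<subseteq> {0..n}"
    by (auto simp: sucm_def inj_on_def)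
  then show ?thesis using endo_inj_surj[of "{0..n}"] by (simp add: bij_betw_def)
qed

lemma alt_map_eq_sucm:
  assumes "is_perm n xs" "1 \<le> n" "a \<le> n"
  shows "alt_map n xs a = sucm n (bc xs a)"
  using bij_betw_apply[OF bc_bij[OF assms(1,2)], of a] assms(3)
  by (auto simp: alt_map_def sucm_def)

lemma alt_map_bij:
  assumes "is_perm n xs" "1 \<le> n"
  shows "bij_betw (alt_map n xs) {0..n} {0..n}"
proof -
  have "bij_betw (sucm n \<circ> bc xs) {0..n} {0..n}"
    using bij_betw_trans[OF bc_bij[OF assms] sucm_bij] .
  then show ?thesis
    by (rule bij_betw_cong[THEN iffD1, rotated]) (simp add: alt_map_eq_sucm[OF assms])
qed

lemma alt_cycles_eq_num_cycles: "alt_cycles n xs = num_cycles {0..n} (alt_map n xs)"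
  by (simp add: alt_cycles_def num_cycles_def reach_def)

section \<open>Invariance under the x--y operations\<close>

lemma alt_cycles_cong:
  assumes "is_perm n phi" "1 \<le> n" "\<And>a. a \<le> n \<Longrightarrow> bc theta a = bc phi a"
  shows "alt_cycles n phi = alt_cycles n theta"
proof -
  have "alt_map n phi a = alt_map n theta a" if "a \<in> {0..n}" for a
    using assms(3) that by (simp add: alt_map_def)
  then show ?thesis
    unfolding alt_cycles_eq_num_cycles
    using num_cycles_cong bij_betw_imp_surj_on[OF alt_map_bij[OF assms(1,2)]] by blast
qed

lemma bypass_alt_map:
  assumes p: "is_perm n xs" and n: "1 \<le> n" and x: "x \<le> n" and a: "a \<le> n"
  shows "bypass (alt_map n xs) (sucm n x) a
    = sucm n (if bc xs a = x then bc xs (sucm n x) else bc xs a)"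
  using alt_map_eq_sucm[OF p n a] alt_map_eq_sucm[OF p n sucm_le[OF x]]
    sucm_eq_iff[OF bc_le[OF p n a] x]
  by (simp add: bypass_def)

lemma alt_cycles_exch:
  assumes p: "is_perm n phi" and q: "is_perm n theta" and n: "1 \<le> n"
    and x: "x \<le> n" and y: "y \<le> n" and c_u: "bc phi (sucm n x) = y"
    and theta: "bc theta = exch n (bc phi) x y"
  shows "alt_cycles n phi = alt_cycles n theta"
proof (cases "y = x \<or> bc phi y = x")
  case True
  then show ?thesis using theta by (intro alt_cycles_cong[OF p n]) (simp add: exch_def)
next
  case False
  let ?c = "bc phi" and ?d = "bc theta" and ?u = "sucm n x"
  have u: "?u \<le> n" using sucm_le[OF x] .
  obtain w where w: "w \<le> n" "?c w = x" using bc_surj[OF p n x] .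
  have c_x: "?c a = x \<longleftrightarrow> a = w" if "a \<le> n" for a
    using bc_eq_iff[OF p n that w(1)] w(2) by simp
  have y_u: "y \<noteq> ?u" using bc_no_fixpoint[OF p n u] c_u by auto
  have w_y: "w \<noteq> y" "w \<noteq> ?u" using w False c_u by auto
  have d: "?d a = (if a = ?u then ?c y else if a = w then y else if a = y then x else ?c a)"
    if "a \<le> n" for a
    using theta that False c_x[OF that] by (simp add: exch_def)
  have d_x: "?d a = x \<longleftrightarrow> a = y" if "a \<le> n" for a
    using d[OF that] c_x[OF that] False y_u w_y by auto
  have "sucm n y \<noteq> ?u" "sucm n (?c y) \<noteq> ?u"
    using False sucm_eq_iff[OF y x] sucm_eq_iff[OF bc_le[OF p n y] x] by auto
  then have moved: "alt_map n phi ?u \<noteq> ?u" "alt_map n theta ?u \<noteq> ?u"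
    using alt_map_eq_sucm[OF p n u] alt_map_eq_sucm[OF q n u] d[OF u] c_u by auto
  show ?thesis
    unfolding alt_cycles_eq_num_cycles
  proof (rule num_cycles_eq_if_bypass_eq[OF _ alt_map_bij[OF p n] alt_map_bij[OF q n] _ moved])
    fix a assume a: "a \<in> {0..n}" "a \<noteq> ?u"
    then have a_le: "a \<le> n" by simp
    then show "bypass (alt_map n phi) ?u a = bypass (alt_map n theta) ?u a"
      using bypass_alt_map[OF p n x a_le] bypass_alt_map[OF q n x a_le] a(2)
        c_x d_x d[OF a_le] d[OF u] c_u w w_y by auto
  qed (use u in auto)
qed

lemma relabel_bij_up:
  assumes "x < n" "x + 1 < y" "y \<le> n"
  shows "bij_betw (relabel n x y) {0..n} {0..n}"
proof -
  have "inj_on (relabel n x y) {0..n}" "relabel n x y ` {0..n} \<subseteq> {0..n}"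
    using assms by (auto simp: relabel_def inj_on_def split: if_splits)
  then show ?thesis using endo_inj_surj[of "{0..n}"] by (simp add: bij_betw_def)
qed

lemma relabel_bij_down:
  assumes "y < x" "x \<le> n"
  shows "bij_betw (relabel n x y) {0..n} {0..n}"
proof -
  have "inj_on (relabel n x y) {0..n}" "relabel n x y ` {0..n} \<subseteq> {0..n}"
    using assms by (auto simp: relabel_def inj_on_def split: if_splits)
  then show ?thesis using endo_inj_surj[of "{0..n}"] by (simp add: bij_betw_def)
qed

lemma alt_cycles_relabel:
  assumes p: "is_perm n phi" and q: "is_perm n theta" and n: "1 \<le> n"
    and r: "bij_betw r {0..n} {0..n}" and h: "h ` {0..n} \<subseteq> {0..n}"
    and r_h: "\<And>t. t \<le> n \<Longrightarrow> r (h t) = sucm n (r t)"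
    and theta: "\<And>a. a \<le> n \<Longrightarrow> bc theta (r a) = r (bc phi a)"
  shows "alt_cycles n theta = num_cycles {0..n} (h \<circ> bc phi)"
    and "bij_betw (h \<circ> bc phi) {0..n} {0..n}"
proof -
  have c: "bc phi a \<in> {0..n}" if "a \<in> {0..n}" for a
    using bc_le[OF p n] that by simp
  then have hc: "(h \<circ> bc phi) ` {0..n} \<subseteq> {0..n}" using h by auto
  have comm: "r ((h \<circ> bc phi) a) = alt_map n theta (r a)" if "a \<in> {0..n}" for a
  proof -
    have "r ((h \<circ> bc phi) a) = sucm n (r (bc phi a))" using r_h c[OF that] by simp
    also have "\<dots> = sucm n (bc theta (r a))" using theta that by simp
    also have "\<dots> = alt_map n theta (r a)"
      using alt_map_eq_sucm[OF q n] bij_betw_apply[OF r that] by simp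
    finally show ?thesis .
  qed
  show "alt_cycles n theta = num_cycles {0..n} (h \<circ> bc phi)"
    unfolding alt_cycles_eq_num_cycles by (rule num_cycles_conj[OF r hc]) (use comm in simp)
  show "bij_betw (h \<circ> bc phi) {0..n} {0..n}"
    by (rule bij_betw_conj[OF _ r alt_map_bij[OF q n] hc]) (use comm in simp_all)
qed

lemma alt_cycles_cyc_up:
  assumes p: "is_perm n phi" and q: "is_perm n theta" and n: "1 \<le> n"
    and xy: "x < n" "x + 3 \<le> y" "y \<le> n" and c_y: "bc phi y = x"
    and theta: "\<And>a. a \<le> n \<Longrightarrow> bc theta (relabel n x y a) = relabel n x y (bc phi a)"
  shows "alt_cycles n phi = alt_cycles n theta"
proof -
  let ?c = "bc phi"
  define h where "h t = (if t = x then x + 2 else if t = x + 1 then y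
    else if t = y - 1 then x + 1 else sucm n t)" for t
  have h_in: "h ` {0..n} \<subseteq> {0..n}" using xy by (auto simp: h_def sucm_def)
  have r_h: "relabel n x y (h t) = sucm n (relabel n x y t)" if "t \<le> n" for t
    using that xy by (auto simp: h_def relabel_def sucm_def)
  have "bij_betw (relabel n x y) {0..n} {0..n}" using xy by (intro relabel_bij_up) auto
  note hc = alt_cycles_relabel[OF p q n this h_in r_h theta]
  have y: "sucm n (y - 1) = y" "y - 1 \<le> n" using xy by (auto simp: sucm_def)
  have c_x: "?c a = x \<longleftrightarrow> a = y" if "a \<le> n" for a
    using bc_eq_iff[OF p n that xy(3)] c_y by simp
  have moved: "alt_map n phi y \<noteq> y" "(h \<circ> ?c) y \<noteq> y"
    using alt_map_eq_sucm[OF p n xy(3)] c_y xy by (auto simp: h_def sucm_def)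
  have "num_cycles {0..n} (alt_map n phi) = num_cycles {0..n} (h \<circ> ?c)"
  proof (rule num_cycles_eq_if_bypass_eq[OF _ alt_map_bij[OF p n] hc(2) _ moved])
    fix a assume a: "a \<in> {0..n}" "a \<noteq> y"
    then have a_le: "a \<le> n" and ca: "?c a \<noteq> x" "?c a \<le> n"
      using c_x bc_le[OF p n] by auto
    have "bypass (alt_map n phi) y a = (if ?c a = y - 1 then x + 1 else sucm n (?c a))"
      using bypass_alt_map[OF p n y(2) a_le, unfolded y(1)] c_y xy by (simp add: sucm_def)
    moreover have "bypass (h \<circ> ?c) y a = (if ?c a = x + 1 then x + 2 else h (?c a))"
      using ca xy c_y by (auto simp: bypass_def h_def sucm_def)
    ultimately show "bypass (alt_map n phi) y a = bypass (h \<circ> ?c) y a"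
      using ca xy by (auto simp: h_def sucm_def)
  qed (use xy in auto)
  then show ?thesis using hc(1) by (simp add: alt_cycles_eq_num_cycles)
qed

lemma alt_cycles_cyc_down:
  assumes p: "is_perm n phi" and q: "is_perm n theta" and n: "1 \<le> n"
    and xy: "y + 2 \<le> x" "x \<le> n" and c_u: "bc phi (sucm n x) = y" and c_y: "bc phi y = x"
    and theta: "\<And>a. a \<le> n \<Longrightarrow> bc theta (relabel n x y a) = relabel n x y (bc phi a)"
  shows "alt_cycles n phi = alt_cycles n theta"
proof -
  let ?c = "bc phi" and ?u = "sucm n x"
  define h where "h t = (if t = y then x else if t = x - 1 then sucm n x
    else if t = x then y + 1 else sucm n t)" for t
  have h_in: "h ` {0..n} \<subseteq> {0..n}" using xy by (auto simp: h_def sucm_def)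
  have r_h: "relabel n x y (h t) = sucm n (relabel n x y t)" if "t \<le> n" for t
    using that xy by (auto simp: h_def relabel_def sucm_def)
  have "bij_betw (relabel n x y) {0..n} {0..n}" using xy by (intro relabel_bij_down) auto
  note hc = alt_cycles_relabel[OF p q n this h_in r_h theta]
  have u: "?u \<le> n" using sucm_le[OF xy(2)] .
  have moved: "alt_map n phi ?u \<noteq> ?u" "(h \<circ> ?c) ?u \<noteq> ?u"
    using alt_map_eq_sucm[OF p n u] c_u c_y xy by (auto simp: h_def sucm_def)
  have "num_cycles {0..n} (alt_map n phi) = num_cycles {0..n} (h \<circ> ?c)"
  proof (rule num_cycles_eq_if_bypass_eq[OF _ alt_map_bij[OF p n] hc(2) _ moved])
    fix a assume a: "a \<in> {0..n}" "a \<noteq> ?u"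
    then have a_le: "a \<le> n" and ca: "?c a \<noteq> y" "?c a \<le> n"
      using bc_eq_iff[OF p n _ u] c_u bc_le[OF p n] by auto
    have "bypass (alt_map n phi) ?u a = (if ?c a = x then y + 1 else sucm n (?c a))"
      using bypass_alt_map[OF p n xy(2) a_le] c_u xy by (simp add: sucm_def)
    moreover have "bypass (h \<circ> ?c) ?u a = (if ?c a = x - 1 then x else h (?c a))"
      using ca xy c_u by (auto simp: bypass_def h_def sucm_def)
    ultimately show "bypass (alt_map n phi) ?u a = bypass (h \<circ> ?c) ?u a"
      using ca xy by (auto simp: h_def sucm_def)
  qed (use u in auto)
  then show ?thesis using hc(1) by (simp add: alt_cycles_eq_num_cycles)
qed

lemma alt_cycles_cyc:
  assumes p: "is_perm n phi" and q: "is_perm n theta" and n: "1 \<le> n"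
    and x: "x \<le> n" and y: "y \<le> n" and c_u: "bc phi (sucm n x) = y" and c_y: "bc phi y = x"
    and theta: "\<And>a. a \<le> n \<Longrightarrow> bc theta (relabel n x y a) = relabel n x y (bc phi a)"
  shows "alt_cycles n phi = alt_cycles n theta"
proof -
  have "x < n \<and> x + 3 \<le> y \<or> y + 2 \<le> x \<or> (x < n \<and> y = x + 2 \<or> x = y + 1)
      \<or> (y = x \<or> sucm n x = y)"
    using x y by (auto simp: sucm_def)
  then consider (up) "x < n" "x + 3 \<le> y" | (down) "y + 2 \<le> x"
    | (trivial) "x < n \<and> y = x + 2 \<or> x = y + 1" | (fixpoint) "y = x \<or> sucm n x = y"
    by blast
  then show ?thesis
  proof cases
    case up
    then show ?thesis by (rule alt_cycles_cyc_up[OF p q n _ _ y c_y theta])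
  next
    case down
    then show ?thesis by (rule alt_cycles_cyc_down[OF p q n _ x c_u c_y theta])
  next
    case trivial
    then have "relabel n x y t = t" for t by (auto simp: relabel_def)
    then show ?thesis using theta by (intro alt_cycles_cong[OF p n]) simp
  next
    case fixpoint
    then show ?thesis
      using bc_no_fixpoint[OF p n y] bc_no_fixpoint[OF p n sucm_le[OF x]] c_u c_y by auto
  qed
qed

lemma alt_cycles_xy_step:
  assumes "xy_step n phi theta" "1 \<le> n"
  shows "alt_cycles n phi = alt_cycles n theta"
  using assms(1) unfolding xy_step_def
proof
  assume "exch_step n phi theta"
  then obtain x y where "is_perm n phi" "is_perm n theta" "x \<le> n" "y \<le> n"
    "bc phi (sucm n x) = y" "bc theta = exch n (bc phi) x y"
    unfolding exch_step_def by blast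
  then show ?thesis using alt_cycles_exch assms(2) by blast
next
  assume "cyc_step n phi theta"
  then obtain x y where "is_perm n phi" "is_perm n theta" "x \<le> n" "y \<le> n"
    "bc phi (sucm n x) = y" "bc phi y = x"
    "\<And>a. a \<le> n \<Longrightarrow> bc theta (relabel n x y a) = relabel n x y (bc phi a)"
    unfolding cyc_step_def by blast
  then show ?thesis using alt_cycles_cyc assms(2) by blast
qed

theorem mainTheorem3:
  assumes "n \<ge> 1" and "is_perm n phi" and "is_perm n theta"
    and "xy_equiv n phi theta"
  shows "alt_cycles n phi = alt_cycles n theta"
proof -
  have "(\<lambda>p q. xy_step n p q \<or> xy_step n q p)\<^sup>*\<^sup>* phi theta"
    using assms(4) by (simp add: xy_equiv_def)
  then show ?thesis
  proof (induct rule: rtranclp_induct)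
    case (step b c)
    then show ?case
      using alt_cycles_xy_step[OF _ assms(1), of b c] alt_cycles_xy_step[OF _ assms(1), of c b]
      by auto
  qed simp
qed

end
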